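(* Let $L$ be a finite distributive lattice with rank function $r$, and let $\alpha,\beta,\gamma,\delta: L \to [0,\infty)$ satisfy \[ \alpha(x)\beta(y) \leq \gamma(x \vee y)\,\delta(x \wedge y) \quad \text{for all } x,y \in L. \] Then for all subsets $X,Y \subseteq L$, \[ \Big(\sum_{x \in X} \alpha(x)q^{r(x)}\Big)\Big( \sum_{x \in Y} \beta(x)q^{r(x)}\Big) \ll \Big(\sum_{x \in X \vee Y} \gamma(x)q^{r(x)}\Big)\Big( \sum_{x \in X \wedge Y} \delta(x)q^{r(x)}\Big), \] as polynomials in the indeterminate $q$.
   Context: For a finite lattice $L$ and $x \in L$, the rank $r(x)$ is the length (number of strict inequalities) of a longest chain in $L$ having $x$ as its maximal element; so the minimum element has rank $0$. For $X,Y \subseteq L$, $X \vee Y = \{x \vee y : x \in X, y \in Y\}$ and $X \wedge Y = \{x \wedge y : x \in X, y \in Y\}$. For real polynomials $P(q),R(q)$, $P(q) \ll R(q)$ means that every coefficient of $R(q)-P(q)$ is a non-negative real number. *)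

theory Defs
  imports "HOL-Computational_Algebra.Polynomial"
begin

definition lat_rank :: "'a::{finite, lattice} \<Rightarrow> nat" where
  "lat_rank x = Max {length cs - 1 | cs. cs \<noteq> [] \<and> sorted_wrt (<) cs \<and> last cs = x}"

definition set_sup :: "'a::lattice set \<Rightarrow> 'a set \<Rightarrow> 'a set" where
  "set_sup X Y = {sup x y | x y. x \<in> X \<and> y \<in> Y}"

definition set_inf :: "'a::lattice set \<Rightarrow> 'a set \<Rightarrow> 'a set" where
  "set_inf X Y = {inf x y | x y. x \<in> X \<and> y \<in> Y}"

definition rank_gen_poly :: "('a::{finite, lattice} \<Rightarrow> real) \<Rightarrow> 'a set \<Rightarrow> real poly" where
  "rank_gen_poly f X = (\<Sum>x\<in>X. monom (f x) (lat_rank x))"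

definition poly_coeff_le :: "real poly \<Rightarrow> real poly \<Rightarrow> bool" (infix "\<lless>\<^sub>c" 50) where
  "poly_coeff_le P R \<longleftrightarrow> (\<forall>n. 0 \<le> coeff (R - P) n)"

end

theory Submission
  imports Defs
begin

text \<open>
  In a finite distributive lattice \<open>L\<close> every element \<open>x\<close> is determined by
  the set \<open>primes_below x\<close> of join-prime elements below it (Birkhoff's representation);
  this set turns joins into unions and meets into intersections, and a longest chain ending
  in \<open>x\<close> adds one join-prime at a time, so \<open>lat_rank x = card (primes_below x)\<close>.  Hence the
  rank is modular: \<open>r(x \<squnion> y) + r(x \<sqinter> y) = r x + r y\<close>.

  The representation also transfers the Ahlswede--Daykin four functions theorem from power
  sets (proved by induction on the ground set) to \<open>L\<close>.  Applying it to weights supported on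
  pairs of relative complements in a fixed interval \<open>[i, j]\<close> shows that the part of
  \<open>\<Sum>\<^sub>x\<^sub>,\<^sub>y \<alpha> x \<beta> y\<close> over pairs with \<open>x \<sqinter> y = i\<close>, \<open>x \<squnion> y = j\<close> is dominated by the same part for \<open>\<gamma>, \<delta>\<close>.

  Finally, by rank modularity the coefficient of \<open>q\<^sup>n\<close> in a product of generating polynomials
  splits into exactly these interval parts (over \<open>i, j\<close> with \<open>r i + r j = n\<close>), which gives the
  coefficientwise inequality.  Restricting the four functions to \<open>X, Y, X \<squnion> Y, X \<sqinter> Y\<close> yields
  the theorem for arbitrary subsets.
\<close>

section \<open>Birkhoff representation by join-prime elements\<close>

definition join_prime :: "'a::distrib_lattice \<Rightarrow> bool" where
  "join_prime j \<longleftrightarrow> (\<exists>z. \<not> j \<le> z) \<and> (\<forall>a b. j \<le> sup a b \<longrightarrow> j \<le> a \<or> j \<le> b)"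

definition primes_below :: "'a::distrib_lattice \<Rightarrow> 'a set" where
  "primes_below x = {j. join_prime j \<and> j \<le> x}"

lemma primes_below_sup: "primes_below (sup x y) = primes_below x \<union> primes_below y"
  unfolding primes_below_def join_prime_def by (auto intro: le_supI1 le_supI2)

lemma primes_below_inf: "primes_below (inf x y) = primes_below x \<inter> primes_below y"
  unfolding primes_below_def by auto

lemma primes_below_mono: "x \<le> y \<Longrightarrow> primes_below x \<subseteq> primes_below y"
  unfolding primes_below_def by auto

text \<open>Every element is the join of the join-primes below it: an element that is not
  join-prime (and not the top) splits as the join of two strictly smaller elements.\<close>
lemma le_if_primes_below_le:
  fixes x z :: "'a::{finite,distrib_lattice}"
  assumes "\<And>j. join_prime j \<Longrightarrow> j \<le> x \<Longrightarrow> j \<le> z"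
  shows "x \<le> z"
  using assms
proof (induction "card {y. y \<le> x}" arbitrary: x rule: less_induct)
  case (less x)
  show ?case
  proof (cases "join_prime x \<or> (\<forall>z. x \<le> z)")
    case True
    then show ?thesis using less.prems by auto
  next
    case False
    then obtain a b where ab: "x \<le> sup a b" "\<not> x \<le> a" "\<not> x \<le> b"
      unfolding join_prime_def by auto
    have split: "x = sup (inf x a) (inf x b)"
      using ab(1) by (metis inf.absorb1 inf_sup_distrib1)
    have "inf x c \<le> z" if "\<not> x \<le> c" for c
    proof (rule less.hyps)
      show "card {y. y \<le> inf x c} < card {y. y \<le> x}"
        by (rule psubset_card_mono) (use that in \<open>auto intro: order_trans\<close>)
      show "j \<le> z" if "join_prime j" "j \<le> inf x c" for j
        using less.prems that by auto
    qed
    then show ?thesis using ab(2,3) by (subst split) simp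
  qed
qed

lemma primes_below_le_iff:
  fixes x y :: "'a::{finite,distrib_lattice}"
  shows "primes_below x \<subseteq> primes_below y \<longleftrightarrow> x \<le> y"
  using le_if_primes_below_le[of x y] primes_below_mono[of x y]
  by (auto simp: primes_below_def)

lemma inj_primes_below: "inj (primes_below :: 'a::{finite,distrib_lattice} \<Rightarrow> _)"
  by (rule injI) (metis order.antisym order_refl primes_below_le_iff)

lemma primes_below_strict_mono:
  fixes x y :: "'a::{finite,distrib_lattice}"
  shows "x < y \<Longrightarrow> primes_below x \<subset> primes_below y"
  by (meson less_le_not_le primes_below_le_iff psubsetI subset_antisym)

text \<open>The join-primes lying below some member of a set \<open>S\<close> are exactly the join-primes
  below one element (the join of \<open>S\<close>, or the bottom for empty \<open>S\<close>).\<close>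
lemma exists_join_of_primes:
  fixes S :: "'a::{finite,distrib_lattice} set"
  shows "\<exists>y. primes_below y = {k. join_prime k \<and> (\<exists>s\<in>S. k \<le> s)}"
proof -
  have "finite S" by simp
  then show ?thesis
  proof (induction S rule: finite_induct)
    case empty
    have "Inf_fin UNIV \<le> z" for z :: 'a by (auto intro: Inf_fin.coboundedI)
    then have "\<not> k \<le> Inf_fin UNIV" if "join_prime k" for k :: 'a
      using that unfolding join_prime_def by (auto intro: order_trans)
    then show ?case by (intro exI[of _ "Inf_fin UNIV"]) (auto simp: primes_below_def)
  next
    case (insert s S)
    then obtain y where y: "primes_below y = {k. join_prime k \<and> (\<exists>s\<in>S. k \<le> s)}" by blast
    have "primes_below (sup s y) = {k. join_prime k \<and> (\<exists>s'\<in>insert s S. k \<le> s')}"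
      by (simp add: primes_below_sup y) (auto simp: primes_below_def)
    then show ?case ..
  qed
qed

section \<open>The rank counts join-primes, hence is modular\<close>

lemma sorted_wrt_le_last:
  fixes cs :: "'a::order list"
  assumes "sorted_wrt (<) cs" "a \<in> set cs"
  shows "a \<le> last cs"
proof -
  obtain bs l where "cs = bs @ [l]" using assms(2) by (cases cs rule: rev_cases) auto
  then show ?thesis using assms by (auto simp: sorted_wrt_append less_imp_le)
qed

text \<open>Along a strictly increasing chain the number of join-primes strictly increases.\<close>
lemma chain_length_le_card_primes:
  fixes cs :: "'a::{finite,distrib_lattice} list"
  shows "sorted_wrt (<) cs \<Longrightarrow> cs \<noteq> [] \<Longrightarrow> length cs - 1 \<le> card (primes_below (last cs))"
proof (induction cs rule: rev_induct)
  case Nil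
  then show ?case by simp
next
  case (snoc c cs)
  show ?case
  proof (cases "cs = []")
    case True
    then show ?thesis by simp
  next
    case False
    have sorted: "sorted_wrt (<) cs" and "last cs < c"
      using snoc.prems False by (simp_all add: sorted_wrt_append)
    then have "card (primes_below (last cs)) < card (primes_below c)"
      by (intro psubset_card_mono primes_below_strict_mono) auto
    then show ?thesis using snoc.IH[OF sorted False] by simp
  qed
qed

text \<open>Conversely, removing a maximal join-prime below \<open>x\<close> gives an element covered by \<open>x\<close>,
  so a chain of length \<open>card (primes_below x)\<close> ends in \<open>x\<close>.\<close>
lemma chain_of_length_card_primes:
  fixes x :: "'a::{finite,distrib_lattice}"
  shows "\<exists>cs. cs \<noteq> [] \<and> sorted_wrt (<) cs \<and> last cs = x \<and> length cs - 1 = card (primes_below x)"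
proof (induction "card (primes_below x)" arbitrary: x)
  case 0
  then show ?case by (intro exI[of _ "[x]"]) simp
next
  case (Suc n x)
  have "primes_below x \<noteq> {}" using Suc.hyps(2) by auto
  then obtain j where j: "j \<in> primes_below x"
    and j_max: "\<forall>k\<in>primes_below x. j \<le> k \<longrightarrow> j = k"
    using finite_has_maximal[OF finite] by blast
  obtain y where "primes_below y = {k. join_prime k \<and> (\<exists>s\<in>primes_below x - {j}. k \<le> s)}"
    using exists_join_of_primes by blast
  also have "\<dots> = primes_below x - {j}"
  proof (intro equalityI subsetI)
    fix k assume "k \<in> {k. join_prime k \<and> (\<exists>s\<in>primes_below x - {j}. k \<le> s)}"
    then obtain s where k: "join_prime k" "k \<le> s" and s: "s \<in> primes_below x" "s \<noteq> j" by blast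
    have "k \<le> x" using k(2) s(1) unfolding primes_below_def by auto
    moreover have "k \<noteq> j" using j_max k(2) s by auto
    ultimately show "k \<in> primes_below x - {j}" using k(1) unfolding primes_below_def by blast
  qed (auto simp: primes_below_def)
  finally have y: "primes_below y = primes_below x - {j}" .
  then have "y \<le> x" "y \<noteq> x" using j primes_below_le_iff[of y x] by auto
  then have "y < x" by simp
  have "card (primes_below y) = n" using y j Suc.hyps(2) by (simp add: card_Diff_singleton)
  then obtain cs where cs: "cs \<noteq> []" "sorted_wrt (<) cs" "last cs = y" "length cs - 1 = n"
    using Suc.hyps(1) by blast
  have "sorted_wrt (<) (cs @ [x])"
    using cs \<open>y < x\<close> sorted_wrt_le_last[OF cs(2)]
    by (auto simp: sorted_wrt_append intro: order_le_less_trans)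
  then show ?case using cs Suc.hyps(2) by (intro exI[of _ "cs @ [x]"]) auto
qed

lemma lat_rank_eq_card_primes:
  fixes x :: "'a::{finite,distrib_lattice}"
  shows "lat_rank x = card (primes_below x)"
proof -
  let ?A = "{length cs - 1 |cs. cs \<noteq> [] \<and> sorted_wrt (<) cs \<and> last cs = x}"
  have bound: "\<forall>m\<in>?A. m \<le> card (primes_below x)"
  proof
    fix m assume "m \<in> ?A"
    then obtain cs where "m = length cs - 1" "cs \<noteq> []" "sorted_wrt (<) cs" "last cs = x" by blast
    then show "m \<le> card (primes_below x)" using chain_length_le_card_primes[of cs] by simp
  qed
  have finite: "finite ?A"
    by (rule finite_subset[of _ "{..card (primes_below x)}"]) (use bound in blast, simp)
  obtain cs where
    "cs \<noteq> [] \<and> sorted_wrt (<) cs \<and> last cs = x \<and> length cs - 1 = card (primes_below x)"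
    using chain_of_length_card_primes by blast
  then have "card (primes_below x) \<in> ?A" unfolding mem_Collect_eq by (intro exI[of _ cs]) auto
  then show ?thesis unfolding lat_rank_def using bound by (intro Max_eqI[OF finite]) auto
qed

text \<open>Modularity of the rank function, the only property of ranks the main proof uses.\<close>
lemma lat_rank_modular:
  fixes x y :: "'a::{finite,distrib_lattice}"
  shows "lat_rank (sup x y) + lat_rank (inf x y) = lat_rank x + lat_rank y"
  unfolding lat_rank_eq_card_primes primes_below_sup primes_below_inf
  by (rule card_Un_Int[symmetric]) simp_all

section \<open>The four functions theorem\<close>

lemma four_functions_two_point:
  fixes a0 a1 b0 b1 c0 c1 d0 d1 :: real
  assumes nonneg: "0 \<le> a0" "0 \<le> a1" "0 \<le> b0" "0 \<le> b1" "0 \<le> c0" "0 \<le> c1" "0 \<le> d0" "0 \<le> d1"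
    and le: "a0 * b0 \<le> c0 * d0" "a0 * b1 \<le> c1 * d0" "a1 * b0 \<le> c1 * d0" "a1 * b1 \<le> c1 * d1"
  shows "(a0 + a1) * (b0 + b1) \<le> (c0 + c1) * (d0 + d1)"
proof -
  have mixed: "a0 * b1 + a1 * b0 \<le> c1 * d0 + c0 * d1"
  proof (cases "c1 * d0 = 0")
    case True
    then have "a0 * b1 = 0" "a1 * b0 = 0" using le nonneg by (smt (verit) mult_nonneg_nonneg)+
    then show ?thesis using True mult_nonneg_nonneg[OF nonneg(5,8)] by linarith
  next
    case False
    define p where "p = c1 * d0"
    have "p > 0" using False nonneg unfolding p_def by (simp add: less_le)
    have "(a0 * b1) * (a1 * b0) = (a0 * b0) * (a1 * b1)" by (simp add: algebra_simps)
    also have "\<dots> \<le> (c0 * d0) * (c1 * d1)" by (rule mult_mono) (use le nonneg in auto)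
    finally have cross: "(a0 * b1) * (a1 * b0) \<le> p * (c0 * d1)"
      unfolding p_def by (simp add: algebra_simps)
    have "0 \<le> (p - a0 * b1) * (p - a1 * b0)"
      using le unfolding p_def by (intro mult_nonneg_nonneg) auto
    then have "p * (a0 * b1 + a1 * b0) \<le> p * p + (a0 * b1) * (a1 * b0)"
      by (simp add: algebra_simps)
    also have "\<dots> \<le> p * (p + c0 * d1)" using cross by (simp add: algebra_simps)
    finally show ?thesis using \<open>p > 0\<close> unfolding p_def by (simp add: mult_le_cancel_left)
  qed
  have "(a0 + a1) * (b0 + b1) = a0 * b0 + (a0 * b1 + a1 * b0) + a1 * b1"
    by (simp add: algebra_simps)
  also have "\<dots> \<le> c0 * d0 + (c1 * d0 + c0 * d1) + c1 * d1" using le(1,4) mixed by linarith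
  also have "\<dots> = (c0 + c1) * (d0 + d1)" by (simp add: algebra_simps)
  finally show ?thesis .
qed

lemma sum_Pow_insert:
  assumes "finite F" "a \<notin> F"
  shows "sum f (Pow (insert a F)) = (\<Sum>S\<in>Pow F. f S + f (insert a S))"
proof -
  have "inj_on (insert a) (Pow F)" using assms(2) by (auto intro!: inj_onI)
  moreover have "Pow F \<inter> insert a ` Pow F = {}" using assms(2) by auto
  ultimately show ?thesis
    unfolding Pow_insert using assms(1) by (simp add: sum.union_disjoint sum.reindex sum.distrib)
qed

text \<open>Ahlswede--Daykin for the power set of a finite set: adding a point \<open>a\<close> to the ground
  set merges each pair \<open>S, insert a S\<close>, and the merged functions satisfy the hypothesis
  again by the two-point case.\<close>
lemma four_functions_Pow:
  fixes f1 f2 f3 f4 :: "'b set \<Rightarrow> real"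
  assumes "finite A"
    and "\<And>S. S \<subseteq> A \<Longrightarrow> 0 \<le> f1 S" "\<And>S. S \<subseteq> A \<Longrightarrow> 0 \<le> f2 S"
    and "\<And>S. S \<subseteq> A \<Longrightarrow> 0 \<le> f3 S" "\<And>S. S \<subseteq> A \<Longrightarrow> 0 \<le> f4 S"
    and "\<And>S T. S \<subseteq> A \<Longrightarrow> T \<subseteq> A \<Longrightarrow> f1 S * f2 T \<le> f3 (S \<union> T) * f4 (S \<inter> T)"
  shows "sum f1 (Pow A) * sum f2 (Pow A) \<le> sum f3 (Pow A) * sum f4 (Pow A)"
  using assms
proof (induction A arbitrary: f1 f2 f3 f4 rule: finite_induct)
  case empty
  then show ?case by simp
next
  case (insert a F)
  let ?merge = "\<lambda>f S. f S + f (insert a S)"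
  have "sum (?merge f1) (Pow F) * sum (?merge f2) (Pow F)
      \<le> sum (?merge f3) (Pow F) * sum (?merge f4) (Pow F)"
  proof (rule insert.IH)
    fix S T assume S: "S \<subseteq> F" and T: "T \<subseteq> F"
    then have sub: "S \<subseteq> insert a F" "insert a S \<subseteq> insert a F"
      "T \<subseteq> insert a F" "insert a T \<subseteq> insert a F" by auto
    then show "0 \<le> ?merge f1 S" "0 \<le> ?merge f2 S" "0 \<le> ?merge f3 S" "0 \<le> ?merge f4 S"
      using insert.prems(1-4) by (meson add_nonneg_nonneg)+
    have "a \<notin> S" "a \<notin> T" using S T insert.hyps(2) by auto
    then have "S \<union> insert a T = insert a (S \<union> T)" "S \<inter> insert a T = S \<inter> T"
      "insert a S \<union> T = insert a (S \<union> T)" "insert a S \<inter> T = S \<inter> T"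
      "insert a S \<union> insert a T = insert a (S \<union> T)" "insert a S \<inter> insert a T = insert a (S \<inter> T)"
      by auto
    moreover have "S \<union> T \<subseteq> insert a F" "insert a (S \<union> T) \<subseteq> insert a F"
      "S \<inter> T \<subseteq> insert a F" "insert a (S \<inter> T) \<subseteq> insert a F" using S T by auto
    ultimately show "?merge f1 S * ?merge f2 T \<le> ?merge f3 (S \<union> T) * ?merge f4 (S \<inter> T)"
      using sub insert.prems by (intro four_functions_two_point) metis+
  qed
  then show ?case using insert.hyps by (simp add: sum_Pow_insert)
qed

text \<open>Ahlswede--Daykin for a finite distributive lattice, transported along the embedding
  \<open>primes_below\<close> into the power set of the join-primes (functions extended by zero).\<close>
theorem four_functions:
  fixes f1 f2 f3 f4 :: "'a::{finite,distrib_lattice} \<Rightarrow> real"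
  assumes nonneg: "\<And>x. 0 \<le> f1 x" "\<And>x. 0 \<le> f2 x" "\<And>x. 0 \<le> f3 x" "\<And>x. 0 \<le> f4 x"
    and le: "\<And>x y. f1 x * f2 y \<le> f3 (sup x y) * f4 (inf x y)"
  shows "sum f1 UNIV * sum f2 UNIV \<le> sum f3 UNIV * sum f4 UNIV"
proof -
  define J where "J = {j::'a. join_prime j}"
  define ext where "ext g S = (if S \<in> range primes_below then g (inv primes_below S) else 0)"
    for g :: "'a \<Rightarrow> real" and S
  have ext_primes: "ext g (primes_below x) = g x" for g x
    unfolding ext_def by (simp add: inv_f_f[OF inj_primes_below])
  have sum_ext: "sum (ext g) (Pow J) = sum g UNIV" for g
  proof -
    have "range primes_below \<subseteq> Pow J" unfolding J_def primes_below_def by auto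
    then have "sum (ext g) (Pow J) = sum (ext g) (range primes_below)"
      by (intro sum.mono_neutral_right) (auto simp: ext_def)
    also have "\<dots> = sum g UNIV"
      by (simp add: sum.reindex[OF inj_primes_below] ext_primes)
    finally show ?thesis .
  qed
  have ext_nonneg: "0 \<le> ext g S" if "\<And>x. 0 \<le> g x" for g S
    unfolding ext_def using that by auto
  have "sum (ext f1) (Pow J) * sum (ext f2) (Pow J) \<le> sum (ext f3) (Pow J) * sum (ext f4) (Pow J)"
  proof (rule four_functions_Pow)
    fix S T
    show "0 \<le> ext f1 S" "0 \<le> ext f2 S" "0 \<le> ext f3 S" "0 \<le> ext f4 S"
      using ext_nonneg nonneg by blast+
    show "ext f1 S * ext f2 T \<le> ext f3 (S \<union> T) * ext f4 (S \<inter> T)"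
    proof (cases "S \<in> range primes_below \<and> T \<in> range primes_below")
      case True
      then obtain x y where "S = primes_below x" "T = primes_below y" by auto
      then show ?thesis
        by (simp add: ext_primes le flip: primes_below_sup primes_below_inf)
    next
      case False
      then have "ext f1 S * ext f2 T = 0" unfolding ext_def by auto
      moreover have "0 \<le> ext f3 (S \<union> T) * ext f4 (S \<inter> T)"
        using ext_nonneg nonneg by (simp add: mult_nonneg_nonneg)
      ultimately show ?thesis by (simp del: mult_eq_0_iff)
    qed
  qed (simp add: J_def)
  then show ?thesis by (simp add: sum_ext)
qed

section \<open>Relative complements in an interval\<close>

definition rel_compl :: "'a::lattice \<Rightarrow> 'a \<Rightarrow> 'a \<Rightarrow> 'a \<Rightarrow> bool" where
  "rel_compl i j x y \<longleftrightarrow> inf x y = i \<and> sup x y = j"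

lemma rel_compl_sym: "rel_compl i j x y \<longleftrightarrow> rel_compl i j y x"
  unfolding rel_compl_def by (simp add: inf_commute sup_commute)

lemma rel_compl_unique:
  fixes x y y' :: "'a::distrib_lattice"
  assumes "rel_compl i j x y" "rel_compl i j x y'"
  shows "y = y'"
proof -
  have eq: "inf x y = inf x y'" "sup x y = sup x y'" using assms unfolding rel_compl_def by auto
  have "y = inf y (sup x y)" by (simp add: inf.absorb1)
  also have "\<dots> = sup (inf x y') (inf y y')" using eq by (simp add: inf_sup_distrib1 inf_commute)
  also have "\<dots> = inf (sup x y) y'" by (simp add: inf_sup_distrib2)
  also have "\<dots> = y'" using eq by (simp add: inf.absorb2)
  finally show ?thesis .
qed

lemma rel_compl_sup_inf:
  fixes x y z w :: "'a::distrib_lattice"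
  assumes "rel_compl i j x y" "rel_compl i j z w"
  shows "rel_compl i j (sup x z) (inf y w)"
proof -
  have "inf (sup x z) (inf y w) = inf x y" if "inf x y = inf z w" "sup x y = sup z w"
    using that by (smt (verit, del_insts) inf.idem inf_commute inf_sup_distrib2 sup_commute
        sup_inf_absorb)
  moreover have "sup (sup x z) (inf y w) = sup x y" if "inf x y = inf z w" "sup x y = sup z w"
    using that by (metis (no_types, opaque_lifting) inf_sup_absorb sup.right_idem sup_assoc
        sup_commute sup_inf_distrib2)
  ultimately show ?thesis using assms unfolding rel_compl_def by auto
qed

lemma rel_compl_inf_sup:
  fixes x y z w :: "'a::distrib_lattice"
  assumes "rel_compl i j x y" "rel_compl i j z w"
  shows "rel_compl i j (inf x z) (sup y w)"
proof -
  have "inf (inf x z) (sup y w) = inf x y" if "inf x y = inf z w" "sup x y = sup z w"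
    using that by (metis (no_types, lifting) inf.idem inf_commute inf_left_commute
        inf_sup_distrib2 sup.idem)
  moreover have "sup (inf x z) (sup y w) = sup x y" if "inf x y = inf z w" "sup x y = sup z w"
    using that by (smt (verit, ccfv_SIG) inf_sup_absorb sup.idem sup_commute sup_inf_distrib2
        sup_left_commute)
  ultimately show ?thesis using assms unfolding rel_compl_def by auto
qed

text \<open>\<open>f x\<close> weighted by \<open>g\<close> at the (unique, if any) complement of \<open>x\<close> in \<open>[i, j]\<close>; summing over
  \<open>x\<close> gives the contribution of the pairs with meet \<open>i\<close> and join \<open>j\<close> to \<open>(\<Sum>f)(\<Sum>g)\<close>.\<close>
definition compl_weight ::
    "('a::{finite,lattice} \<Rightarrow> real) \<Rightarrow> ('a \<Rightarrow> real) \<Rightarrow> 'a \<Rightarrow> 'a \<Rightarrow> 'a \<Rightarrow> real" where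
  "compl_weight f g i j x = (\<Sum>y\<in>UNIV. if rel_compl i j x y then f x * g y else 0)"

lemma compl_weight_eq:
  fixes x y :: "'a::{finite,distrib_lattice}"
  assumes "rel_compl i j x y"
  shows "compl_weight f g i j x = f x * g y"
proof -
  have "(if rel_compl i j x y' then f x * g y' else 0) = (if y' = y then f x * g y' else 0)" for y'
    using assms rel_compl_unique[of i j x y'] by auto
  then show ?thesis unfolding compl_weight_def by simp
qed

lemma compl_weight_nonneg:
  "(\<And>x. 0 \<le> f x) \<Longrightarrow> (\<And>x. 0 \<le> g x) \<Longrightarrow> 0 \<le> compl_weight f g i j x"
  unfolding compl_weight_def by (intro sum_nonneg) simp

lemma sum_compl_weight_swap:
  "sum (compl_weight g f i j) UNIV = sum (compl_weight f g i j) UNIV"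
proof -
  have "(if rel_compl i j y x then g y * f x else 0) = (if rel_compl i j x y then f x * g y else 0)"
    for x y by (simp add: rel_compl_sym mult.commute)
  then show ?thesis unfolding compl_weight_def by (subst sum.swap) simp
qed

text \<open>The four functions hypothesis is inherited by complement weights: the product of
  the weights at \<open>x\<close> and \<open>z\<close> regroups into two instances of the hypothesis.\<close>
lemma compl_weight_four_functions:
  fixes a b c d :: "'a::{finite,distrib_lattice} \<Rightarrow> real"
  assumes nonneg: "\<And>x. 0 \<le> a x" "\<And>x. 0 \<le> b x" "\<And>x. 0 \<le> c x" "\<And>x. 0 \<le> d x"
    and le: "\<And>x y. a x * b y \<le> c (sup x y) * d (inf x y)"
  shows "compl_weight a b i j x * compl_weight b a i j z
       \<le> compl_weight c d i j (sup x z) * compl_weight d c i j (inf x z)"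
proof (cases "(\<exists>y. rel_compl i j x y) \<and> (\<exists>w. rel_compl i j z w)")
  case True
  then obtain y w where y: "rel_compl i j x y" and w: "rel_compl i j z w" by blast
  have "compl_weight a b i j x * compl_weight b a i j z = (a x * b z) * (a w * b y)"
    using y w by (simp add: compl_weight_eq)
  also have "\<dots> \<le> (c (sup x z) * d (inf x z)) * (c (sup w y) * d (inf w y))"
    by (intro mult_mono le mult_nonneg_nonneg nonneg)
  also have "\<dots> = compl_weight c d i j (sup x z) * compl_weight d c i j (inf x z)"
    using rel_compl_sup_inf[OF y w] rel_compl_inf_sup[OF y w]
    by (simp add: compl_weight_eq inf_commute sup_commute)
  finally show ?thesis .
next
  case False
  then have "compl_weight a b i j x * compl_weight b a i j z = 0"
    unfolding compl_weight_def by auto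
  moreover have "0 \<le> compl_weight c d i j (sup x z) * compl_weight d c i j (inf x z)"
    using nonneg by (simp add: compl_weight_nonneg mult_nonneg_nonneg)
  ultimately show ?thesis by (simp del: mult_eq_0_iff)
qed

text \<open>The interval-wise inequality: by the four functions theorem the square of the
  \<open>(a, b)\<close>-contribution of \<open>[i, j]\<close> is dominated by the square of the \<open>(c, d)\<close>-contribution.\<close>
lemma sum_compl_weight_le:
  fixes a b c d :: "'a::{finite,distrib_lattice} \<Rightarrow> real"
  assumes nonneg: "\<And>x. 0 \<le> a x" "\<And>x. 0 \<le> b x" "\<And>x. 0 \<le> c x" "\<And>x. 0 \<le> d x"
    and le: "\<And>x y. a x * b y \<le> c (sup x y) * d (inf x y)"
  shows "sum (compl_weight a b i j) UNIV \<le> sum (compl_weight c d i j) UNIV"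
proof -
  have "sum (compl_weight a b i j) UNIV * sum (compl_weight b a i j) UNIV
      \<le> sum (compl_weight c d i j) UNIV * sum (compl_weight d c i j) UNIV"
    by (intro four_functions compl_weight_nonneg compl_weight_four_functions assms)
  then have "(sum (compl_weight a b i j) UNIV)\<^sup>2 \<le> (sum (compl_weight c d i j) UNIV)\<^sup>2"
    by (simp add: sum_compl_weight_swap power2_eq_square)
  moreover have "0 \<le> sum (compl_weight c d i j) UNIV"
    by (intro sum_nonneg compl_weight_nonneg nonneg)
  ultimately show ?thesis by (rule power2_le_imp_le)
qed

section \<open>Coefficients of products of rank generating polynomials\<close>

lemma coeff_sum_monom_mult:
  fixes f g :: "'b \<Rightarrow> real"
  shows "coeff ((\<Sum>x\<in>A. monom (f x) (r x)) * (\<Sum>y\<in>B. monom (g y) (s y))) n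
     = (\<Sum>x\<in>A. \<Sum>y\<in>B. if r x + s y = n then f x * g y else 0)"
  by (simp add: sum_product coeff_sum mult_monom coeff_monom)

lemma rank_gen_poly_restrict:
  "rank_gen_poly f X = rank_gen_poly (\<lambda>x. if x \<in> X then f x else 0) UNIV"
  unfolding rank_gen_poly_def by (rule sum.mono_neutral_cong_left) auto

lemma sum_by_meet_join:
  fixes h :: "'a::{finite,lattice} \<Rightarrow> 'a \<Rightarrow> 'b::comm_monoid_add"
  shows "(\<Sum>i\<in>UNIV. \<Sum>j\<in>UNIV. \<Sum>x\<in>UNIV. \<Sum>y\<in>UNIV. if rel_compl i j x y then h x y else 0)
       = (\<Sum>x\<in>UNIV. \<Sum>y\<in>UNIV. h x y)"
proof -
  let ?t = "\<lambda>i j x y. if rel_compl i j x y then h x y else 0"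
  have "(\<Sum>i\<in>UNIV. \<Sum>j\<in>UNIV. \<Sum>x\<in>UNIV. \<Sum>y\<in>UNIV. ?t i j x y)
      = (\<Sum>i\<in>UNIV. \<Sum>x\<in>UNIV. \<Sum>j\<in>UNIV. \<Sum>y\<in>UNIV. ?t i j x y)"
    by (rule sum.cong[OF refl], rule sum.swap)
  also have "\<dots> = (\<Sum>x\<in>UNIV. \<Sum>i\<in>UNIV. \<Sum>y\<in>UNIV. \<Sum>j\<in>UNIV. ?t i j x y)"
    by (rule sum.swap[THEN trans], rule sum.cong[OF refl], rule sum.cong[OF refl], rule sum.swap)
  also have "\<dots> = (\<Sum>x\<in>UNIV. \<Sum>y\<in>UNIV. \<Sum>i\<in>UNIV. \<Sum>j\<in>UNIV. ?t i j x y)"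
    by (rule sum.cong[OF refl], rule sum.swap)
  also have "\<dots> = (\<Sum>x\<in>UNIV. \<Sum>y\<in>UNIV. h x y)"
  proof (intro sum.cong refl)
    fix x y
    have "?t i j x y = (if j = sup x y then if i = inf x y then h x y else 0 else 0)" for i j
      unfolding rel_compl_def by auto
    then show "(\<Sum>i\<in>UNIV. \<Sum>j\<in>UNIV. ?t i j x y) = h x y" by simp
  qed
  finally show ?thesis .
qed

text \<open>By rank modularity, the coefficient of \<open>q\<^sup>n\<close> in \<open>P\<^sub>f \<cdot> P\<^sub>g\<close> collects the contributions of
  exactly those intervals \<open>[i, j]\<close> with \<open>r i + r j = n\<close>.\<close>
lemma coeff_rank_gen_poly_mult:
  fixes f g :: "'a::{finite,distrib_lattice} \<Rightarrow> real"
  shows "coeff (rank_gen_poly f UNIV * rank_gen_poly g UNIV) n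
       = (\<Sum>i\<in>UNIV. \<Sum>j\<in>UNIV. if lat_rank i + lat_rank j = n
            then sum (compl_weight f g i j) UNIV else 0)"
proof -
  have modular: "(if rel_compl i j x y then if lat_rank x + lat_rank y = n then f x * g y else 0 else 0)
      = (if lat_rank i + lat_rank j = n then if rel_compl i j x y then f x * g y else 0 else 0)"
    for i j x y :: 'a
    using lat_rank_modular[of x y] unfolding rel_compl_def by auto
  have "coeff (rank_gen_poly f UNIV * rank_gen_poly g UNIV) n
      = (\<Sum>x\<in>UNIV. \<Sum>y\<in>UNIV. if lat_rank x + lat_rank y = n then f x * g y else 0)"
    unfolding rank_gen_poly_def by (rule coeff_sum_monom_mult)
  also have "\<dots> = (\<Sum>i\<in>UNIV. \<Sum>j\<in>UNIV. \<Sum>x\<in>UNIV. \<Sum>y\<in>UNIV. if lat_rank i + lat_rank j = n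
                      then if rel_compl i j x y then f x * g y else 0 else 0)"
    unfolding modular[symmetric] by (rule sum_by_meet_join[symmetric])
  also have "\<dots> = (\<Sum>i\<in>UNIV. \<Sum>j\<in>UNIV. if lat_rank i + lat_rank j = n
                      then sum (compl_weight f g i j) UNIV else 0)"
    unfolding compl_weight_def by (rule sum.cong[OF refl])+ simp
  finally show ?thesis .
qed

lemma coeff_rank_gen_poly_le:
  fixes a b c d :: "'a::{finite,distrib_lattice} \<Rightarrow> real"
  assumes "\<And>x. 0 \<le> a x" "\<And>x. 0 \<le> b x" "\<And>x. 0 \<le> c x" "\<And>x. 0 \<le> d x"
    and "\<And>x y. a x * b y \<le> c (sup x y) * d (inf x y)"
  shows "coeff (rank_gen_poly a UNIV * rank_gen_poly b UNIV) n
       \<le> coeff (rank_gen_poly c UNIV * rank_gen_poly d UNIV) n"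
  unfolding coeff_rank_gen_poly_mult
  by (intro sum_mono) (simp add: sum_compl_weight_le[where a = a and b = b and c = c and d = d, OF assms])

theorem theorem1p5:
  fixes \<alpha> \<beta> \<gamma> \<delta> :: "'a::{finite, distrib_lattice} \<Rightarrow> real"
  assumes "\<And>x. 0 \<le> \<alpha> x" and "\<And>x. 0 \<le> \<beta> x" and "\<And>x. 0 \<le> \<gamma> x" and "\<And>x. 0 \<le> \<delta> x"
    and "\<And>x y. \<alpha> x * \<beta> y \<le> \<gamma> (sup x y) * \<delta> (inf x y)"
  shows "\<forall>X Y :: 'a set. rank_gen_poly \<alpha> X * rank_gen_poly \<beta> Y \<lless>\<^sub>c
           rank_gen_poly \<gamma> (set_sup X Y) * rank_gen_poly \<delta> (set_inf X Y)"
proof (intro allI)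
  fix X Y :: "'a set"
  let ?restr = "\<lambda>f Z x. if x \<in> Z then f x else 0"
  have "sup x y \<in> set_sup X Y" "inf x y \<in> set_inf X Y" if "x \<in> X" "y \<in> Y" for x y
    using that unfolding set_sup_def set_inf_def by blast+
  then have restr_le: "?restr \<alpha> X x * ?restr \<beta> Y y
      \<le> ?restr \<gamma> (set_sup X Y) (sup x y) * ?restr \<delta> (set_inf X Y) (inf x y)" for x y
    using assms by (auto intro: mult_nonneg_nonneg)
  have "coeff (rank_gen_poly \<alpha> X * rank_gen_poly \<beta> Y) n
      \<le> coeff (rank_gen_poly \<gamma> (set_sup X Y) * rank_gen_poly \<delta> (set_inf X Y)) n" for n
    unfolding rank_gen_poly_restrict[of _ X] rank_gen_poly_restrict[of _ Y]
      rank_gen_poly_restrict[of _ "set_sup X Y"] rank_gen_poly_restrict[of _ "set_inf X Y"]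
    by (rule coeff_rank_gen_poly_le) (use assms restr_le in auto)
  then show "rank_gen_poly \<alpha> X * rank_gen_poly \<beta> Y \<lless>\<^sub>c
      rank_gen_poly \<gamma> (set_sup X Y) * rank_gen_poly \<delta> (set_inf X Y)"
    by (simp add: poly_coeff_le_def coeff_diff)
qed

end
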